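(* Let $\lambda=2\cos(\pi/5)$ and let $H_5$ be the subgroup of $SL(2,\mathbb R)$ generated by $S=\begin{pmatrix}0&1\\-1&0\end{pmatrix}$ and $T=\begin{pmatrix}1&\lambda\\0&1\end{pmatrix}$. Let $H_5^5$ be the subgroup of $H_5$ generated by all fifth powers $x^5$, $x\in H_5$, and let $H_5'=[H_5,H_5]$ be the commutator subgroup. Then neither $H_5^5$ nor $H_5'$ is a congruence subgroup.
   Context: For an ideal $A$ of $\mathbb Z[\lambda]$, $H(A)=\{(a_{ij})\in H_5 : a_{11}-1,\ a_{22}-1,\ a_{12},\ a_{21}\in A\}$. A subgroup of $H_5$ is called congruence if it contains $H(A)$ for some nonzero ideal $A$ of $\mathbb Z[\lambda]$. *)

theory Defs
  imports "HOL-Analysis.Analysis"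
begin

text \<open>Real 2x2 matrices are rendered as real^2^2 (HOL-Analysis), entries a_ij = A $ i $ j.\<close>

definition lam :: real where "lam = 2 * cos (pi / 5)"

definition Smat :: "real^2^2" where
  "Smat = (\<chi> i j. if i = 1 \<and> j = 2 then 1 else if i = 2 \<and> j = 1 then -1 else 0)"

definition Tmat :: "real^2^2" where
  "Tmat = (\<chi> i j. if i = j then 1 else if i = 1 \<and> j = 2 then lam else 0)"

inductive_set gen_subgroup :: "(real^2^2) set \<Rightarrow> (real^2^2) set" for X where
  gen_one: "mat 1 \<in> gen_subgroup X"
| gen_base: "x \<in> X \<Longrightarrow> x \<in> gen_subgroup X"
| gen_mult: "a \<in> gen_subgroup X \<Longrightarrow> b \<in> gen_subgroup X \<Longrightarrow> a ** b \<in> gen_subgroup X"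
| gen_inv: "a \<in> gen_subgroup X \<Longrightarrow> matrix_inv a \<in> gen_subgroup X"

definition H5 :: "(real^2^2) set" where "H5 = gen_subgroup {Smat, Tmat}"

definition H5_fifth :: "(real^2^2) set" where
  "H5_fifth = gen_subgroup {x ** x ** x ** x ** x | x. x \<in> H5}"

definition H5_comm :: "(real^2^2) set" where
  "H5_comm = gen_subgroup {a ** b ** matrix_inv a ** matrix_inv b | a b. a \<in> H5 \<and> b \<in> H5}"

definition Zlam :: "real set" where
  "Zlam = {of_int a + of_int b * lam | a b. True}"

definition is_ideal_Zlam :: "real set \<Rightarrow> bool" where
  "is_ideal_Zlam A \<longleftrightarrow> A \<subseteq> Zlam \<and> 0 \<in> A \<and> (\<forall>x\<in>A. \<forall>y\<in>A. x + y \<in> A)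
      \<and> (\<forall>r\<in>Zlam. \<forall>x\<in>A. r * x \<in> A)"

definition Hcong :: "real set \<Rightarrow> (real^2^2) set" where
  "Hcong A = {M \<in> H5. M$1$1 - 1 \<in> A \<and> M$2$2 - 1 \<in> A \<and> M$1$2 \<in> A \<and> M$2$1 \<in> A}"

definition congruence_subgroup :: "(real^2^2) set \<Rightarrow> bool" where
  "congruence_subgroup G \<longleftrightarrow> (\<exists>A. is_ideal_Zlam A \<and> A \<noteq> {0} \<and> Hcong A \<subseteq> G)"

end

theory Submission
  imports Defs
begin

text \<open>
  U = S T satisfies U^5 = 1 and S^2 = -1. A ping-pong argument on the pairs (x, y) with
  x y > 0 and x y < 0 shows that no alternating word in S and nontrivial powers of U equals
  \<plusminus>1, so H5/{\<plusminus>1} is the free product Z/2 * Z/5 and the exponent sum of U modulo 5 is a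
  homomorphism H5 \<rightarrow> Z/5, which kills fifth powers and commutators.

  Conversely, a nonzero ideal A contains an integer m 5^k with m prime to 5 and k \<ge> 1. The
  fourth power of X = T^-w S T^w S T^w S T^-w S T^t S is congruent to 1 modulo m when m divides
  w and t (then X \<equiv> S^5 = S), and modulo Q = 5^k = 2r + 1 when w \<equiv> 1 and t
  \<equiv> r (then X has determinant 1 and trace \<equiv> 0, so X^2 \<equiv> -1). With w, t
  chosen by the Chinese remainder theorem, X^4 lies in H(A) but its U-exponent is 4t \<equiv> 3
  mod 5.
\<close>

lemma lam_sq: "lam * lam = lam + 1"
proof -
  define c where "c = cos (pi / 5)"
  have "4 * c^3 - 3 * c = cos (3 * (pi / 5))"
    unfolding c_def by (rule cos_treble_cos[symmetric])
  also have "\<dots> = - cos (2 * (pi / 5))"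
    using cos_pi_minus[of "2 * (pi / 5)"] by (simp add: field_simps)
  also have "\<dots> = - (2 * c^2 - 1)"
    unfolding c_def by (simp only: cos_double_cos)
  finally have "(c + 1) * (4 * c^2 - 2 * c - 1) = 0"
    by (simp add: algebra_simps power2_eq_square power3_eq_cube)
  moreover have "c > 0"
    unfolding c_def by (rule cos_gt_zero) (use pi_gt_zero in auto)
  ultimately have "4 * c^2 - 2 * c - 1 = 0" by simp
  thus ?thesis unfolding lam_def c_def[symmetric] by (simp add: algebra_simps power2_eq_square)
qed

lemma lam_mult_lam_mult: "lam * (lam * x) = x + lam * x"
  by (simp add: mult.assoc[symmetric] lam_sq algebra_simps)

lemma lam_pos: "lam > 0"
  unfolding lam_def by (simp add: cos_gt_zero)

definition mat2 :: "real \<Rightarrow> real \<Rightarrow> real \<Rightarrow> real \<Rightarrow> real^2^2" where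
  "mat2 a b c d = (\<chi> i j. if i = 1 then (if j = 1 then a else b) else (if j = 1 then c else d))"

lemma mat2_nth [simp]:
  "mat2 a b c d $ 1 $ 1 = a" "mat2 a b c d $ 1 $ 2 = b"
  "mat2 a b c d $ 2 $ 1 = c" "mat2 a b c d $ 2 $ 2 = d"
  by (simp_all add: mat2_def)

lemma mat2_eq_iff:
  "(M :: real^2^2) = N \<longleftrightarrow> M$1$1 = N$1$1 \<and> M$1$2 = N$1$2 \<and> M$2$1 = N$2$1 \<and> M$2$2 = N$2$2"
  by (auto simp: vec_eq_iff forall_2)

lemma mat2_mult [simp]:
  "mat2 a b c d ** mat2 e f g h = mat2 (a*e + b*g) (a*f + b*h) (c*e + d*g) (c*f + d*h)"
  by (simp add: mat2_eq_iff matrix_matrix_mult_def sum_2)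

lemma mat2_uminus: "- mat2 a b c d = mat2 (-a) (-b) (-c) (-d)"
  by (simp add: mat2_eq_iff)

lemma mat_1_mat2: "(mat 1 :: real^2^2) = mat2 1 0 0 1"
  by (simp add: mat2_eq_iff mat_def)

lemma mat_mult_nth: "((M :: real^2^2) ** N)$i$j = M$i$1 * N$1$j + M$i$2 * N$2$j"
  by (simp add: matrix_matrix_mult_def sum_2)

lemma matrix_mul_uminus_right: "(A :: real^2^2) ** (- B :: real^2^2) = - (A ** B)"
  unfolding mat2_eq_iff by (simp add: mat_mult_nth)

lemma matrix_mul_uminus_left: "(- A :: real^2^2) ** (B :: real^2^2) = - (A ** B)"
  unfolding mat2_eq_iff by (simp add: mat_mult_nth)

lemma matrix_inv_unique:
  assumes "A ** B = mat 1" "B ** A = mat 1"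
  shows "matrix_inv A = B"
proof -
  have inv: "A ** matrix_inv A = mat 1 \<and> matrix_inv A ** A = mat 1"
    unfolding matrix_inv_def by (rule someI[of _ B]) (use assms in blast)
  have "matrix_inv A = matrix_inv A ** (A ** B)" using assms by simp
  also have "\<dots> = (matrix_inv A ** A) ** B" by (simp add: matrix_mul_assoc)
  also have "\<dots> = B" using inv by simp
  finally show ?thesis .
qed

lemma Smat_mat2: "Smat = mat2 0 1 (-1) 0"
  by (simp add: mat2_eq_iff Smat_def)

lemma Tmat_mat2: "Tmat = mat2 1 lam 0 1"
  by (simp add: mat2_eq_iff Tmat_def)

lemma Smat_sq: "Smat ** Smat = - mat 1"
  by (simp add: Smat_mat2 mat_1_mat2 mat2_uminus)

definition Umat :: "real^2^2" where "Umat = Smat ** Tmat"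

lemma Umat_mat2: "Umat = mat2 0 1 (-1) (-lam)"
  by (simp add: Umat_def Smat_mat2 Tmat_mat2)

fun U_pow :: "nat \<Rightarrow> real^2^2" where
  "U_pow 0 = mat 1"
| "U_pow (Suc k) = U_pow k ** Umat"

lemma U_pow_add: "U_pow (a + b) = U_pow a ** U_pow b"
  by (induction b) (simp_all add: matrix_mul_assoc)

lemma U_pow_mat2:
  "U_pow 1 = mat2 0 1 (-1) (-lam)"
  "U_pow 2 = mat2 (-1) (-lam) lam lam"
  "U_pow 3 = mat2 lam lam (-lam) (-1)"
  "U_pow 4 = mat2 (-lam) (-1) 1 0"
  "U_pow 5 = mat 1"
  by (simp_all add: numeral_eq_Suc Umat_mat2 mat_1_mat2 lam_sq algebra_simps)

lemma U_pow_mod: "U_pow k = U_pow (k mod 5)"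
proof -
  have "U_pow (5 * j) = mat 1" for j
    by (induction j) (simp_all add: U_pow_add U_pow_mat2)
  hence "U_pow (5 * (k div 5) + k mod 5) = U_pow (k mod 5)"
    by (simp only: U_pow_add matrix_mul_lid)
  thus ?thesis by simp
qed

section \<open>Ping-pong\<close>

definition mat2_act :: "real^2^2 \<Rightarrow> real \<times> real \<Rightarrow> real \<times> real" where
  "mat2_act M p = (M$1$1 * fst p + M$1$2 * snd p, M$2$1 * fst p + M$2$2 * snd p)"

lemma mat2_act_mult: "mat2_act (M ** N) p = mat2_act M (mat2_act N p)"
  by (simp add: mat2_act_def mat_mult_nth algebra_simps)

definition same_sign :: "real \<times> real \<Rightarrow> bool" where
  "same_sign p \<longleftrightarrow> fst p * snd p > 0"

definition opposite_sign :: "real \<times> real \<Rightarrow> bool" where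
  "opposite_sign p \<longleftrightarrow> fst p * snd p < 0"

lemma Smat_act_opposite_sign: "opposite_sign p \<Longrightarrow> same_sign (mat2_act Smat p)"
  by (simp add: mat2_act_def Smat_mat2 same_sign_def opposite_sign_def mult.commute)

lemma U_pow_act_same_sign:
  assumes "k mod 5 \<noteq> 0" "same_sign p"
  shows "opposite_sign (mat2_act (U_pow k) p)"
proof -
  obtain x y where p: "p = (x, y)" and xy: "x * y > 0"
    using assms(2) by (cases p) (simp add: same_sign_def)
  have "0 \<le> x * x" "0 \<le> y * y" "0 \<le> lam * (x * x)" "0 \<le> lam * (y * y)"
    "0 \<le> lam * (lam * (x * x))" "0 \<le> lam * (lam * (y * y))"
    "0 < lam * (x * y)" "0 < lam * (lam * (x * y))"
    using lam_pos xy by simp_all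
  hence "opposite_sign (mat2_act (U_pow j) p)" if "j \<in> {1, 2, 3, 4}" for j
    using that xy unfolding p
    by (auto simp: U_pow_mat2 Umat_mat2 mat2_act_def opposite_sign_def algebra_simps)
  moreover have "k mod 5 \<in> {1, 2, 3, 4}" using assms(1) by auto
  ultimately show ?thesis by (metis U_pow_mod)
qed

fun word :: "nat list \<Rightarrow> real^2^2" where
  "word [] = mat 1"
| "word [k] = U_pow k"
| "word (k # l # ks) = U_pow k ** Smat ** word (l # ks)"

lemma word_Cons: "ks \<noteq> [] \<Longrightarrow> word (k # ks) = U_pow k ** Smat ** word ks"
  by (cases ks) auto

lemma U_pow_mult_word: "U_pow a ** word (b # ys) = word ((a + b) # ys)"
  by (cases ys) (simp_all add: U_pow_add matrix_mul_assoc)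

lemma word_snoc_mult_word: "word (xs @ [a]) ** word (b # ys) = word (xs @ (a + b) # ys)"
proof (induction xs)
  case Nil
  then show ?case by (simp add: U_pow_mult_word)
next
  case (Cons x xs)
  have "word ((x # xs) @ [a]) ** word (b # ys) = U_pow x ** Smat ** (word (xs @ [a]) ** word (b # ys))"
    by (simp add: word_Cons matrix_mul_assoc)
  also have "\<dots> = word ((x # xs) @ (a + b) # ys)"
    using Cons by (simp add: word_Cons)
  finally show ?case .
qed

lemma word_append: "xs \<noteq> [] \<Longrightarrow> ys \<noteq> [] \<Longrightarrow> word (xs @ ys) = word xs ** Smat ** word ys"
  by (induction xs rule: word.induct) (simp_all add: word_Cons matrix_mul_assoc)

lemma word_mult:
  assumes "xs \<noteq> []" "ys \<noteq> []"
  obtains zs where "zs \<noteq> []" "word xs ** word ys = word zs"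
    "sum_list zs = sum_list xs + sum_list ys" "length zs < length xs + length ys"
proof -
  obtain xs' a b ys' where "xs = xs' @ [a]" "ys = b # ys'"
    using assms by (metis rev_exhaust list.exhaust)
  thus ?thesis using that[of "xs' @ (a + b) # ys'"] by (simp add: word_snoc_mult_word)
qed

definition nonzero_mod5 :: "nat list \<Rightarrow> bool" where
  "nonzero_mod5 ks \<longleftrightarrow> (\<forall>k\<in>set ks. k mod 5 \<noteq> 0)"

lemma word_act_same_sign:
  "ks \<noteq> [] \<Longrightarrow> nonzero_mod5 ks \<Longrightarrow> same_sign p \<Longrightarrow> opposite_sign (mat2_act (word ks) p)"
proof (induction ks arbitrary: p rule: word.induct)
  case (3 k l ks)
  hence "same_sign (mat2_act Smat (mat2_act (word (l # ks)) p))"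
    by (intro Smat_act_opposite_sign) (simp add: nonzero_mod5_def)
  hence "opposite_sign (mat2_act (U_pow k) (mat2_act Smat (mat2_act (word (l # ks)) p)))"
    using "3.prems"(2) by (intro U_pow_act_same_sign) (simp_all add: nonzero_mod5_def)
  thus ?case by (simp add: mat2_act_mult)
qed (simp_all add: nonzero_mod5_def U_pow_act_same_sign)

lemma word_not_pm1: "ks \<noteq> [] \<Longrightarrow> nonzero_mod5 ks \<Longrightarrow> word ks \<notin> {mat 1, - mat 1}"
  using word_act_same_sign[of ks "(1, 1)"]
  by (auto simp: same_sign_def opposite_sign_def mat2_act_def mat_1_mat2 mat2_uminus)

text \<open>Conjugating by a power of U rotates the outer exponents away from 0 mod 5, which
  leaves the ping-pong lemma applicable.\<close>
lemma word_not_pm1_outer: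
  assumes "nonzero_mod5 mid"
  shows "word (k # mid @ [l]) \<notin> {mat 1, - mat 1}"
proof
  assume pm1: "word (k # mid @ [l]) \<in> {mat 1, - mat 1}"
  obtain c where c: "c < 3" "(c + k) mod 5 \<noteq> 0" "(l + (5 - c)) mod 5 \<noteq> 0"
    by (atomize_elim, presburger)
  have "U_pow c ** word (k # mid @ [l]) ** U_pow (5 - c) = word ((c + k) # mid @ [l + (5 - c)])"
    using word_snoc_mult_word[of "(c + k) # mid" l "5 - c" "[]"]
    by (simp add: U_pow_mult_word)
  moreover have "U_pow c ** U_pow (5 - c) = mat 1"
    using c(1) by (simp add: U_pow_add[symmetric] U_pow_mat2)
  ultimately have "word ((c + k) # mid @ [l + (5 - c)]) \<in> {mat 1, - mat 1}"
    using pm1 by (auto simp: matrix_mul_uminus_left matrix_mul_uminus_right matrix_mul_assoc)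
  moreover have "nonzero_mod5 ((c + k) # mid @ [l + (5 - c)])"
    using assms c by (simp add: nonzero_mod5_def)
  ultimately show False using word_not_pm1 by blast
qed

lemma word_cancel_trivial_letter:
  assumes "xs \<noteq> []" "ys \<noteq> []" "z mod 5 = 0"
  obtains zs where "zs \<noteq> []" "word (xs @ z # ys) = - word zs"
    "sum_list zs = sum_list xs + sum_list ys" "length zs < length (xs @ z # ys)"
proof -
  obtain zs where zs: "zs \<noteq> []" "word xs ** word ys = word zs"
    "sum_list zs = sum_list xs + sum_list ys" "length zs < length xs + length ys"
    using word_mult[OF assms(1,2)] .
  have "word (xs @ [z] @ ys) = word xs ** (Smat ** U_pow z ** Smat) ** word ys"
    using assms by (simp add: word_append matrix_mul_assoc del: append.simps append_Cons)
  also have "Smat ** U_pow z ** Smat = - mat 1"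
    using assms(3) by (simp add: U_pow_mod[of z] Smat_sq)
  finally have "word (xs @ z # ys) = - word zs"
    using zs(2) by (simp add: matrix_mul_uminus_left matrix_mul_uminus_right)
  thus ?thesis using that zs by simp
qed

lemma word_pm1_imp_dvd_sum:
  "ks \<noteq> [] \<Longrightarrow> word ks \<in> {mat 1, - mat 1} \<Longrightarrow> 5 dvd sum_list ks"
proof (induction "length ks" arbitrary: ks rule: less_induct)
  case less
  consider k where "ks = [k]" | k mid l where "ks = k # mid @ [l]"
    using less.prems(1) by (metis list.exhaust rev_exhaust)
  then show ?case
  proof cases
    case 1
    then show ?thesis
      using word_not_pm1[of ks] less.prems by (auto simp: nonzero_mod5_def dvd_eq_mod_eq_0)
  next
    case (2 k mid l)
    have "\<not> nonzero_mod5 mid" using 2 less.prems(2) word_not_pm1_outer by blast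
    then obtain xs z ys where "mid = xs @ z # ys" and z: "z mod 5 = 0"
      unfolding nonzero_mod5_def by (metis split_list)
    hence ks: "ks = (k # xs) @ z # (ys @ [l])" using 2 by simp
    obtain zs where zs: "zs \<noteq> []" "word ks = - word zs"
      "sum_list zs = sum_list (k # xs) + sum_list (ys @ [l])" "length zs < length ks"
      using word_cancel_trivial_letter[OF _ _ z, of "k # xs" "ys @ [l]"] unfolding ks by (simp, blast)
    have "word zs = - word ks" using zs(2) by simp
    hence "word zs \<in> {mat 1, - mat 1}" using less.prems(2) by (elim insertE emptyE) simp_all
    hence "5 dvd sum_list zs" using less.hyps zs(1,4) by blast
    moreover have "sum_list ks = sum_list zs + z" using zs(3) ks by simp
    ultimately show ?thesis using z by (simp add: dvd_eq_mod_eq_0[symmetric])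
  qed
qed

section \<open>The exponent sum of U\<close>

lemma U_pow_inverse:
  "U_pow k ** U_pow (5 - k mod 5) = mat 1 \<and> U_pow (5 - k mod 5) ** U_pow k = mat 1"
proof -
  have "U_pow k ** U_pow (5 - k mod 5) = U_pow (k + (5 - k mod 5))"
    by (rule U_pow_add[symmetric])
  also have "k + (5 - k mod 5) = 5 * (k div 5 + 1)" by presburger
  also have "U_pow (5 * (k div 5 + 1)) = mat 1"
    by (subst U_pow_mod) simp
  finally show ?thesis by (metis U_pow_add add.commute)
qed

lemma Smat_pow_4: "Smat ** Smat ** Smat ** Smat = mat 1"
  by (simp add: Smat_mat2 mat_1_mat2)

fun inv_word :: "nat list \<Rightarrow> nat list" where
  "inv_word [] = []"
| "inv_word [k] = [5 - k mod 5]"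
| "inv_word (k # l # ks) = inv_word (l # ks) @ [0, 0, 5 - k mod 5]"

lemma inv_word_nonempty: "ks \<noteq> [] \<Longrightarrow> inv_word ks \<noteq> []"
  by (induction ks rule: inv_word.induct) auto

lemma dvd_sum_inv_word: "5 dvd sum_list ks + sum_list (inv_word ks)"
  by (induction ks rule: inv_word.induct) (simp_all, presburger+)

text \<open>Since S^-1 = S^3, the inverse of U^k S W is W^-1 S S S U^(5 - k mod 5).\<close>
lemma word_inv_word:
  "ks \<noteq> [] \<Longrightarrow> word ks ** word (inv_word ks) = mat 1 \<and> word (inv_word ks) ** word ks = mat 1"
proof (induction ks rule: inv_word.induct)
  case (3 k l ks)
  define W where "W = word (l # ks)"
  define W' where "W' = word (inv_word (l # ks))"
  define V where "V = U_pow (5 - k mod 5)"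
  have IH: "W ** W' = mat 1" "W' ** W = mat 1" using 3 by (simp_all add: W_def W'_def)
  have UV: "U_pow k ** V = mat 1" "V ** U_pow k = mat 1"
    using U_pow_inverse[of k] by (simp_all add: V_def)
  have inv: "word (inv_word (k # l # ks)) = W' ** Smat ** Smat ** Smat ** V"
    using word_append[OF inv_word_nonempty, of "l # ks" "[0, 0, 5 - k mod 5]"]
    by (simp add: W'_def V_def matrix_mul_assoc)
  have "word (k # l # ks) ** word (inv_word (k # l # ks))
      = U_pow k ** (Smat ** (W ** W') ** Smat ** Smat ** Smat) ** V"
    by (simp add: inv W_def matrix_mul_assoc del: inv_word.simps)
  also have "\<dots> = mat 1" using IH UV Smat_pow_4 by (simp add: matrix_mul_assoc)
  moreover have "word (inv_word (k # l # ks)) ** word (k # l # ks)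
      = W' ** (Smat ** Smat ** Smat ** (V ** U_pow k) ** Smat) ** W"
    by (simp add: inv W_def matrix_mul_assoc del: inv_word.simps)
  moreover have "\<dots> = mat 1" using IH UV Smat_pow_4 by (simp add: matrix_mul_assoc)
  ultimately show ?case by simp
qed (simp_all add: U_pow_inverse)

lemma matrix_inv_word: "ks \<noteq> [] \<Longrightarrow> matrix_inv (word ks) = word (inv_word ks)"
  using word_inv_word by (blast intro: matrix_inv_unique)

lemma word_eq_imp_sum_cong:
  assumes "ks \<noteq> []" "js \<noteq> []" "word ks = word js"
  shows "int (sum_list ks) mod 5 = int (sum_list js) mod 5"
proof -
  obtain zs where zs: "zs \<noteq> []" "word ks ** word (inv_word js) = word zs"
    "sum_list zs = sum_list ks + sum_list (inv_word js)"
    using word_mult[OF assms(1) inv_word_nonempty[OF assms(2)]] by blast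
  have "word zs = mat 1" using zs(2) word_inv_word[OF assms(2)] assms(3) by simp
  hence "5 dvd sum_list ks + sum_list (inv_word js)"
    using word_pm1_imp_dvd_sum[OF zs(1)] zs(3) by simp
  thus ?thesis using dvd_sum_inv_word[of js] by presburger
qed

definition words :: "(real^2^2) set" where
  "words = {word ks | ks. ks \<noteq> []}"

text \<open>The exponent sum of U modulo 5 of any word representing M; by word_eq_imp_sum_cong it
  does not depend on the word (outside words the value is unspecified).\<close>
definition U_exponent :: "real^2^2 \<Rightarrow> int" where
  "U_exponent M = (SOME e. \<exists>ks. ks \<noteq> [] \<and> M = word ks \<and> e = int (sum_list ks) mod 5)"

lemma U_exponent_word:
  assumes "ks \<noteq> []"
  shows "U_exponent (word ks) = int (sum_list ks) mod 5"
proof -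
  have "\<exists>js. js \<noteq> [] \<and> word ks = word js \<and> U_exponent (word ks) = int (sum_list js) mod 5"
    unfolding U_exponent_def by (rule someI_ex) (use assms in blast)
  thus ?thesis using word_eq_imp_sum_cong[OF assms] by metis
qed

lemma words_mult: "A \<in> words \<Longrightarrow> B \<in> words \<Longrightarrow> A ** B \<in> words"
  unfolding words_def by (blast elim: word_mult)

lemma words_matrix_inv: "A \<in> words \<Longrightarrow> matrix_inv A \<in> words"
  unfolding words_def by (auto simp: matrix_inv_word inv_word_nonempty)

lemma U_exponent_mult:
  assumes "A \<in> words" "B \<in> words"
  shows "U_exponent (A ** B) = (U_exponent A + U_exponent B) mod 5"
proof -
  obtain xs ys where "xs \<noteq> []" "ys \<noteq> []" "A = word xs" "B = word ys"
    using assms by (auto simp: words_def)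
  moreover obtain zs where "zs \<noteq> []" "word xs ** word ys = word zs"
    "sum_list zs = sum_list xs + sum_list ys"
    using word_mult[OF calculation(1,2)] by blast
  ultimately show ?thesis by (simp add: U_exponent_word mod_add_eq)
qed

lemma U_exponent_matrix_inv:
  "A \<in> words \<Longrightarrow> U_exponent (matrix_inv A) = - U_exponent A mod 5"
proof -
  assume "A \<in> words"
  then obtain ks where ks: "ks \<noteq> []" "A = word ks" by (auto simp: words_def)
  have "U_exponent (matrix_inv A) = int (sum_list (inv_word ks)) mod 5"
    using ks by (simp add: matrix_inv_word U_exponent_word inv_word_nonempty)
  also have "\<dots> = - int (sum_list ks) mod 5"
    using dvd_sum_inv_word[of ks] by presburger
  also have "\<dots> = - U_exponent A mod 5"
    using ks by (simp add: U_exponent_word mod_minus_eq)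
  finally show ?thesis .
qed

lemma gen_subgroup_least:
  assumes "X \<subseteq> K" "mat 1 \<in> K" "\<And>a b. a \<in> K \<Longrightarrow> b \<in> K \<Longrightarrow> a ** b \<in> K"
    "\<And>a. a \<in> K \<Longrightarrow> matrix_inv a \<in> K"
  shows "gen_subgroup X \<subseteq> K"
proof
  fix M assume "M \<in> gen_subgroup X"
  thus "M \<in> K" by induction (use assms in auto)
qed

lemma Smat_word: "Smat = word [0, 0]"
  by simp

lemma Tmat_word: "Tmat = word [0, 0, 0, 1]"
  by (simp add: Tmat_mat2 Smat_mat2 Umat_mat2 mat_1_mat2)

lemma mat_1_word: "mat 1 = word [0]"
  by simp

lemma H5_subset_words: "H5 \<subseteq> words"
  unfolding H5_def
proof (rule gen_subgroup_least)
  show "{Smat, Tmat} \<subseteq> words" "mat 1 \<in> words"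
    unfolding words_def Smat_word Tmat_word mat_1_word by blast+
qed (simp_all add: words_mult words_matrix_inv)

definition U_exponent_kernel :: "(real^2^2) set" where
  "U_exponent_kernel = {M \<in> words. U_exponent M = 0}"

lemma gen_subgroup_subset_U_exponent_kernel:
  "X \<subseteq> U_exponent_kernel \<Longrightarrow> gen_subgroup X \<subseteq> U_exponent_kernel"
proof (rule gen_subgroup_least)
  have "mat 1 \<in> words" unfolding words_def mat_1_word by blast
  moreover have "U_exponent (mat 1) = 0" using U_exponent_word[of "[0]"] by simp
  ultimately show "mat 1 \<in> U_exponent_kernel" by (simp add: U_exponent_kernel_def)
qed (auto simp: U_exponent_kernel_def words_mult words_matrix_inv U_exponent_mult
      U_exponent_matrix_inv)

lemma H5_fifth_subset_U_exponent_kernel: "H5_fifth \<subseteq> U_exponent_kernel"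
  unfolding H5_fifth_def
proof (rule gen_subgroup_subset_U_exponent_kernel, safe)
  fix x assume "x \<in> H5"
  hence x: "x \<in> words" using H5_subset_words by blast
  have "U_exponent (x ** x ** x ** x ** x) = 0"
    using x by (simp add: U_exponent_mult words_mult mod_add_left_eq mod_add_right_eq)
  thus "x ** x ** x ** x ** x \<in> U_exponent_kernel"
    using x by (simp add: U_exponent_kernel_def words_mult)
qed

lemma H5_comm_subset_U_exponent_kernel: "H5_comm \<subseteq> U_exponent_kernel"
  unfolding H5_comm_def
proof (rule gen_subgroup_subset_U_exponent_kernel, safe)
  fix a b assume "a \<in> H5" "b \<in> H5"
  hence ab: "a \<in> words" "b \<in> words" "matrix_inv a \<in> words" "matrix_inv b \<in> words"
    using H5_subset_words words_matrix_inv by blast+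
  have "U_exponent (a ** b ** matrix_inv a ** matrix_inv b)
      = (U_exponent a + U_exponent b - U_exponent a - U_exponent b) mod 5"
    using ab by (simp add: U_exponent_mult U_exponent_matrix_inv words_mult mod_add_eq mod_diff_eq)
  thus "a ** b ** matrix_inv a ** matrix_inv b \<in> U_exponent_kernel"
    using ab by (simp add: U_exponent_kernel_def words_mult)
qed

section \<open>Arithmetic in Z[\<lambda>]\<close>

lemma Zlam_of_int [simp]: "of_int a \<in> Zlam"
  unfolding Zlam_def by (rule CollectI, rule exI[of _ a], rule exI[of _ 0]) simp

lemma Zlam_numeral [simp]: "numeral n \<in> Zlam"
  using Zlam_of_int[of "numeral n"] by simp

lemma Zlam_0 [simp]: "0 \<in> Zlam" and Zlam_1 [simp]: "1 \<in> Zlam"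
  using Zlam_of_int[of 0] Zlam_of_int[of 1] by simp_all

lemma Zlam_lam [simp]: "lam \<in> Zlam"
  unfolding Zlam_def by (rule CollectI, rule exI[of _ 0], rule exI[of _ 1]) simp

lemma Zlam_add [simp]: "x \<in> Zlam \<Longrightarrow> y \<in> Zlam \<Longrightarrow> x + y \<in> Zlam"
proof -
  assume "x \<in> Zlam" "y \<in> Zlam"
  then obtain a b c d where "x = of_int a + of_int b * lam" "y = of_int c + of_int d * lam"
    unfolding Zlam_def by blast
  hence "x + y = of_int (a + c) + of_int (b + d) * lam" by (simp add: algebra_simps)
  thus ?thesis unfolding Zlam_def by blast
qed

lemma Zlam_uminus [simp]: "x \<in> Zlam \<Longrightarrow> - x \<in> Zlam"
proof -
  assume "x \<in> Zlam"
  then obtain a b where "x = of_int a + of_int b * lam" unfolding Zlam_def by blast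
  hence "- x = of_int (- a) + of_int (- b) * lam" by simp
  thus ?thesis unfolding Zlam_def by blast
qed

lemma Zlam_diff [simp]: "x \<in> Zlam \<Longrightarrow> y \<in> Zlam \<Longrightarrow> x - y \<in> Zlam"
  using Zlam_add[of x "- y"] by simp

lemma Zlam_mult [simp]: "x \<in> Zlam \<Longrightarrow> y \<in> Zlam \<Longrightarrow> x * y \<in> Zlam"
proof -
  assume "x \<in> Zlam" "y \<in> Zlam"
  then obtain a b c d where "x = of_int a + of_int b * lam" "y = of_int c + of_int d * lam"
    unfolding Zlam_def by blast
  hence "x * y = of_int (a * c + b * d) + of_int (a * d + b * c + b * d) * lam"
    by (simp add: algebra_simps lam_mult_lam_mult)
  thus ?thesis unfolding Zlam_def by blast
qed

lemma int_quadratic_form_eq_0: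
  fixes a b :: int
  assumes "a^2 + a * b - b^2 = 0"
  shows "a = 0 \<and> b = 0"
  using assms
proof (induction "nat (\<bar>a\<bar> + \<bar>b\<bar>)" arbitrary: a b rule: less_induct)
  case less
  show ?case
  proof (cases "a = 0 \<and> b = 0")
    case False
    have "even (a^2 + a * b - b^2)" using less.prems by simp
    hence "even a \<and> even b" by (cases "even a"; cases "even b") (auto simp: power2_eq_square)
    then obtain a' b' where ab: "a = 2 * a'" "b = 2 * b'" by (auto elim!: evenE)
    have "a'^2 + a' * b' - b'^2 = 0" using less.prems unfolding ab by (simp add: power2_eq_square)
    moreover have "nat (\<bar>a'\<bar> + \<bar>b'\<bar>) < nat (\<bar>a\<bar> + \<bar>b\<bar>)" using False ab by auto
    ultimately have "a' = 0 \<and> b' = 0" using less.hyps by blast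
    thus ?thesis using ab by simp
  qed
qed

lemma Zlam_times_conjugate:
  "(of_int (a + b) - of_int b * lam) * (of_int a + of_int b * lam) = of_int (a^2 + a * b - b^2)"
  by (simp add: algebra_simps power2_eq_square lam_mult_lam_mult)

lemma Zlam_coords_eq_0:
  assumes "of_int a + of_int b * lam = 0"
  shows "a = 0 \<and> b = 0"
  using Zlam_times_conjugate[of a b] assms int_quadratic_form_eq_0 by (simp del: of_int_diff)

definition Zlam_multiples :: "int \<Rightarrow> real set" where
  "Zlam_multiples c = (\<lambda>z. of_int c * z) ` Zlam"

lemma Zlam_multiplesI: "z \<in> Zlam \<Longrightarrow> of_int c * z \<in> Zlam_multiples c"
  unfolding Zlam_multiples_def by blast

lemma Zlam_multiples_0 [simp]: "0 \<in> Zlam_multiples c"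
  using Zlam_multiplesI[OF Zlam_0] by simp

lemma Zlam_multiples_add [simp]:
  "x \<in> Zlam_multiples c \<Longrightarrow> y \<in> Zlam_multiples c \<Longrightarrow> x + y \<in> Zlam_multiples c"
  unfolding Zlam_multiples_def by (auto simp: distrib_left[symmetric])

lemma Zlam_multiples_mult [simp]:
  "y \<in> Zlam \<Longrightarrow> x \<in> Zlam_multiples c \<Longrightarrow> y * x \<in> Zlam_multiples c"
  "y \<in> Zlam \<Longrightarrow> x \<in> Zlam_multiples c \<Longrightarrow> x * y \<in> Zlam_multiples c"
  unfolding Zlam_multiples_def by (auto simp: mult.left_commute mult.assoc)

lemma Zlam_multiples_coprime:
  assumes "coprime m q" "x \<in> Zlam_multiples m" "x \<in> Zlam_multiples q"
  shows "x \<in> Zlam_multiples (m * q)"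
proof -
  obtain a b c d where x: "x = of_int m * (of_int a + of_int b * lam)"
    "x = of_int q * (of_int c + of_int d * lam)"
    using assms(2,3) unfolding Zlam_multiples_def Zlam_def by blast
  have "of_int (m * a - q * c) + of_int (m * b - q * d) * lam = 0"
    using x by (simp add: algebra_simps)
  hence "m * a = q * c" "m * b = q * d" using Zlam_coords_eq_0 by fastforce+
  hence "q dvd a" "q dvd b"
    using assms(1) by (metis coprime_commute coprime_dvd_mult_right_iff dvd_triv_left)+
  then obtain a' b' where "a = q * a'" "b = q * b'" by (auto elim!: dvdE)
  hence "x = of_int (m * q) * (of_int a' + of_int b' * lam)"
    using x(1) by (simp add: algebra_simps)
  thus ?thesis unfolding Zlam_multiples_def Zlam_def by blast
qed

lemma ideal_Zlam_multiples_subset: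
  "is_ideal_Zlam A \<Longrightarrow> of_int n \<in> A \<Longrightarrow> Zlam_multiples n \<subseteq> A"
  unfolding is_ideal_Zlam_def Zlam_multiples_def by (auto simp: mult.commute)

lemma ideal_contains_nonzero_int:
  assumes "is_ideal_Zlam A" "A \<noteq> {0}"
  obtains n where "n \<noteq> 0" "of_int n \<in> A"
proof -
  obtain x where x: "x \<in> A" "x \<noteq> 0" "x \<in> Zlam"
    using assms unfolding is_ideal_Zlam_def by blast
  then obtain a b where ab: "x = of_int a + of_int b * lam" unfolding Zlam_def by blast
  have "of_int (a + b) - of_int b * lam \<in> Zlam" by simp
  hence "of_int (a^2 + a * b - b^2) \<in> A"
    using assms(1) x(1) Zlam_times_conjugate[of a b] unfolding is_ideal_Zlam_def ab by metis
  moreover have "a^2 + a * b - b^2 \<noteq> 0"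
    using int_quadratic_form_eq_0 x(2) ab by fastforce
  ultimately show ?thesis using that by blast
qed

section \<open>Congruences of matrices\<close>

definition Zlam_mat :: "real^2^2 \<Rightarrow> bool" where
  "Zlam_mat M \<longleftrightarrow> (\<forall>i j. M$i$j \<in> Zlam)"

definition mat_cong :: "int \<Rightarrow> real^2^2 \<Rightarrow> real^2^2 \<Rightarrow> bool" where
  "mat_cong c M N \<longleftrightarrow> Zlam_mat M \<and> Zlam_mat N \<and> (\<forall>i j. M$i$j - N$i$j \<in> Zlam_multiples c)"

lemma Zlam_mat_mat2 [simp]: "Zlam_mat (mat2 a b c d) \<longleftrightarrow> a \<in> Zlam \<and> b \<in> Zlam \<and> c \<in> Zlam \<and> d \<in> Zlam"
  unfolding Zlam_mat_def by (auto simp: forall_2)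

lemma Zlam_mat_mult: "Zlam_mat A \<Longrightarrow> Zlam_mat B \<Longrightarrow> Zlam_mat (A ** B)"
  unfolding Zlam_mat_def by (simp add: mat_mult_nth)

lemma mat_cong_mat2:
  "mat_cong c (mat2 a b e d) (mat2 a' b' e' d') \<longleftrightarrow>
     Zlam_mat (mat2 a b e d) \<and> Zlam_mat (mat2 a' b' e' d') \<and>
     a - a' \<in> Zlam_multiples c \<and> b - b' \<in> Zlam_multiples c \<and>
     e - e' \<in> Zlam_multiples c \<and> d - d' \<in> Zlam_multiples c"
  unfolding mat_cong_def by (auto simp: forall_2)

lemma mat_cong_refl: "Zlam_mat A \<Longrightarrow> mat_cong c A A"
  unfolding mat_cong_def by simp

lemma mat_cong_trans: "mat_cong c A B \<Longrightarrow> mat_cong c B C \<Longrightarrow> mat_cong c A C"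
  unfolding mat_cong_def
  using Zlam_multiples_add[of "A$i$j - B$i$j" c "B$i$j - C$i$j" for i j] by auto

lemma mat_cong_mult: "mat_cong c A A' \<Longrightarrow> mat_cong c B B' \<Longrightarrow> mat_cong c (A ** B) (A' ** B')"
proof -
  assume A: "mat_cong c A A'" and B: "mat_cong c B B'"
  have "(A ** B)$i$j - (A' ** B')$i$j \<in> Zlam_multiples c" for i j
  proof -
    have "(A ** B)$i$j - (A' ** B')$i$j =
        A$i$1 * (B$1$j - B'$1$j) + (A$i$1 - A'$i$1) * B'$1$j
      + A$i$2 * (B$2$j - B'$2$j) + (A$i$2 - A'$i$2) * B'$2$j"
      by (simp add: mat_mult_nth algebra_simps)
    thus ?thesis using A B by (simp add: mat_cong_def Zlam_mat_def)
  qed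
  thus ?thesis using A B by (simp add: mat_cong_def Zlam_mat_mult)
qed

lemma mat_cong_coprime:
  "coprime m q \<Longrightarrow> mat_cong m A B \<Longrightarrow> mat_cong q A B \<Longrightarrow> mat_cong (m * q) A B"
  unfolding mat_cong_def by (blast intro: Zlam_multiples_coprime)

lemma mat_cong_one_imp_Hcong:
  assumes "M \<in> H5" "mat_cong c M (mat 1)" "Zlam_multiples c \<subseteq> A"
  shows "M \<in> Hcong A"
proof -
  have entry: "M$i$j - (mat 1 :: real^2^2)$i$j \<in> A" for i j
    using assms(2,3) unfolding mat_cong_def by blast
  show ?thesis
    using assms(1) entry[of 1 1] entry[of 2 2] entry[of 1 2] entry[of 2 1]
    unfolding Hcong_def by (simp add: mat_1_mat2)
qed

lemma Smat_in_H5: "Smat \<in> H5" and Tmat_in_H5: "Tmat \<in> H5"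
  unfolding H5_def by (simp_all add: gen_subgroup.gen_base)

lemma H5_mult: "a \<in> H5 \<Longrightarrow> b \<in> H5 \<Longrightarrow> a ** b \<in> H5"
  unfolding H5_def by (rule gen_subgroup.gen_mult)

lemma H5_matrix_inv: "a \<in> H5 \<Longrightarrow> matrix_inv a \<in> H5"
  unfolding H5_def by (rule gen_subgroup.gen_inv)

lemma mat_1_in_H5: "mat 1 \<in> H5"
  unfolding H5_def by (rule gen_subgroup.gen_one)

lemma U_exponent_Smat: "U_exponent Smat = 0"
  using U_exponent_word[of "[0, 0]"] by simp

lemma U_exponent_Tmat: "U_exponent Tmat = 1"
  using U_exponent_word[of "[0, 0, 0, 1]"] by (simp add: Tmat_word del: word.simps)

lemma matrix_inv_Tmat: "matrix_inv Tmat = mat2 1 (- lam) 0 1"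
  by (rule matrix_inv_unique) (simp_all add: Tmat_mat2 mat_1_mat2)

definition T_pow :: "int \<Rightarrow> real^2^2" where
  "T_pow a = mat2 1 (of_int a * lam) 0 1"

lemma T_pow_in_H5_and_U_exponent: "T_pow a \<in> H5 \<and> U_exponent (T_pow a) = a mod 5"
proof (induction a rule: int_induct[where k = 0])
  case base
  show ?case using U_exponent_word[of "[0]"] by (simp add: T_pow_def mat_1_mat2[symmetric] mat_1_in_H5)
next
  case (step1 i)
  have "T_pow (i + 1) = T_pow i ** Tmat" by (simp add: T_pow_def Tmat_mat2 algebra_simps)
  moreover have "T_pow i \<in> words" "Tmat \<in> words"
    using step1 Tmat_in_H5 H5_subset_words by blast+
  ultimately show ?case
    using step1 Tmat_in_H5 by (simp add: H5_mult U_exponent_mult U_exponent_Tmat mod_add_left_eq)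
next
  case (step2 i)
  have "T_pow (i - 1) = T_pow i ** matrix_inv Tmat" by (simp add: T_pow_def matrix_inv_Tmat algebra_simps)
  moreover have "T_pow i \<in> words" "Tmat \<in> words" "matrix_inv Tmat \<in> words"
    using step2 Tmat_in_H5 H5_subset_words words_matrix_inv by blast+
  ultimately show ?case
    using step2 H5_matrix_inv[OF Tmat_in_H5]
    by (simp add: H5_mult U_exponent_mult U_exponent_matrix_inv U_exponent_Tmat) presburger
qed

lemma Zlam_mat_T_pow [simp]: "Zlam_mat (T_pow a)"
  by (simp add: T_pow_def)

lemma Zlam_mat_Smat [simp]: "Zlam_mat Smat"
  by (simp add: Smat_mat2)

lemma mat_cong_T_pow: "c dvd a - b \<Longrightarrow> mat_cong c (T_pow a) (T_pow b)"
proof -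
  assume "c dvd a - b"
  then obtain d where "a - b = c * d" by (auto elim!: dvdE)
  hence "of_int a * lam - of_int b * lam = of_int c * (of_int d * lam)"
    by (simp add: algebra_simps flip: of_int_diff of_int_mult)
  thus ?thesis by (simp add: T_pow_def mat_cong_mat2 Zlam_multiplesI)
qed

section \<open>Elements of H(A) outside the kernel\<close>

definition cong_witness :: "int \<Rightarrow> int \<Rightarrow> real^2^2" where
  "cong_witness w t = T_pow (- w) ** Smat ** T_pow w ** Smat ** T_pow w ** Smat ** T_pow (- w) ** Smat
     ** T_pow t ** Smat"

lemma cong_witness_in_H5: "cong_witness w t \<in> H5"
  by (simp add: cong_witness_def T_pow_in_H5_and_U_exponent Smat_in_H5 H5_mult)

lemma U_exponent_cong_witness: "U_exponent (cong_witness w t) = t mod 5"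
proof -
  have "T_pow a \<in> words" "U_exponent (T_pow a) = a mod 5" for a
    using T_pow_in_H5_and_U_exponent H5_subset_words by blast+
  moreover have "Smat \<in> words" using Smat_in_H5 H5_subset_words by blast
  ultimately show ?thesis
    unfolding cong_witness_def by (simp add: U_exponent_mult words_mult U_exponent_Smat mod_add_eq)
qed

lemma cong_witness_cong:
  "c dvd w - w' \<Longrightarrow> c dvd t - t' \<Longrightarrow> mat_cong c (cong_witness w t) (cong_witness w' t')"
  unfolding cong_witness_def
  by (intro mat_cong_mult mat_cong_T_pow mat_cong_refl Zlam_mat_Smat)
    (simp_all add: dvd_diff_commute)

lemma mat2_square_cayley_hamilton:
  "mat2 a b c d ** mat2 a b c d
     = mat2 ((a + d) * a - (a * d - b * c)) ((a + d) * b) ((a + d) * c) ((a + d) * d - (a * d - b * c))"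
  by (simp add: algebra_simps)

lemma mat_cong_square_minus_one:
  assumes "Zlam_mat (mat2 a b e d)" "a * d - b * e = 1" "a + d = of_int c * z" "z \<in> Zlam"
  shows "mat_cong c (mat2 a b e d ** mat2 a b e d) (- mat 1)"
  using assms unfolding mat2_square_cayley_hamilton mat_1_mat2 mat2_uminus
  by (auto simp: mat_cong_mat2 mult.assoc intro!: Zlam_multiplesI)

lemma cong_witness_1:
  "cong_witness 1 r = mat2 (- (1 + 2 * lam) - of_int r * (4 + 8 * lam)) (4 + 4 * lam)
     (lam + of_int r * (2 + 3 * lam)) (- (1 + 2 * lam))"
  by (simp add: cong_witness_def T_pow_def Smat_mat2 mat2_eq_iff algebra_simps lam_mult_lam_mult lam_sq)

lemma cong_witness_1_square_cong:
  "mat_cong (2 * r + 1) (cong_witness 1 r ** cong_witness 1 r) (- mat 1)"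
  unfolding cong_witness_1
proof (rule mat_cong_square_minus_one)
  show "(- (1 + 2 * lam) - of_int r * (4 + 8 * lam)) * (- (1 + 2 * lam))
      - (4 + 4 * lam) * (lam + of_int r * (2 + 3 * lam)) = 1"
    by (simp add: algebra_simps lam_mult_lam_mult lam_sq)
  show "- (1 + 2 * lam) - of_int r * (4 + 8 * lam) + - (1 + 2 * lam) = of_int (2 * r + 1) * (- 2 - 4 * lam)"
    by (simp add: algebra_simps)
qed simp_all

lemma cong_witness_fourth_cong_one_mod_divisor:
  assumes "c dvd w" "c dvd t"
  shows "mat_cong c
    (cong_witness w t ** cong_witness w t ** cong_witness w t ** cong_witness w t) (mat 1)"
proof -
  have X: "mat_cong c (cong_witness w t) (cong_witness 0 0)"
    using assms by (simp add: cong_witness_cong)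
  have "cong_witness 0 0 ** cong_witness 0 0 ** cong_witness 0 0 ** cong_witness 0 0 = mat 1"
    by (simp add: cong_witness_def T_pow_def Smat_mat2 mat_1_mat2)
  thus ?thesis using mat_cong_mult[OF mat_cong_mult[OF mat_cong_mult[OF X X] X] X] by simp
qed

lemma cong_witness_fourth_cong_one_mod_odd:
  assumes "2 * r + 1 = c" "c dvd w - 1" "c dvd t - r"
  shows "mat_cong c
    (cong_witness w t ** cong_witness w t ** cong_witness w t ** cong_witness w t) (mat 1)"
proof -
  have X: "mat_cong c (cong_witness w t) (cong_witness 1 r)"
    using assms by (simp add: cong_witness_cong)
  have X2: "mat_cong c (cong_witness w t ** cong_witness w t) (- mat 1)"
    using mat_cong_trans[OF mat_cong_mult[OF X X] cong_witness_1_square_cong[of r, unfolded assms(1)]]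
    .
  show ?thesis
    using mat_cong_mult[OF X2 X2]
    by (simp add: matrix_mul_assoc matrix_mul_uminus_left matrix_mul_uminus_right)
qed

text \<open>Choose w \<equiv> 0, t \<equiv> 0 mod m and w \<equiv> 1, t \<equiv> r mod Q = 2r + 1; then t \<equiv> r \<equiv> 2 mod 5.\<close>
lemma exists_U_exponent_nonzero_cong_one:
  assumes "coprime m Q" "odd Q" "5 dvd Q"
  obtains M where "M \<in> H5" "mat_cong (m * Q) M (mat 1)" "U_exponent M \<noteq> 0"
proof -
  obtain u v where uv: "u * m + v * Q = 1"
    using bezout_int[of m Q] assms(1) by (metis coprime_iff_gcd_eq_1)
  define r where "r = (Q - 1) div 2"
  define w where "w = u * m"
  define t where "t = r * w"
  define X where "X = cong_witness w t"
  define M where "M = X ** X ** X ** X"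
  have r: "2 * r + 1 = Q" using assms(2) by (simp add: r_def)
  have w: "w - 1 = Q * - v" using uv by (simp add: w_def algebra_simps)
  have "t - r = r * (w - 1)" by (simp add: t_def algebra_simps)
  hence t: "t - r = Q * (- v * r)" unfolding w by simp
  have "mat_cong m M (mat 1)"
    unfolding M_def X_def
    by (rule cong_witness_fourth_cong_one_mod_divisor) (simp_all add: w_def t_def)
  moreover have "mat_cong Q M (mat 1)"
    unfolding M_def X_def using r
    by (rule cong_witness_fourth_cong_one_mod_odd) (simp_all add: w t)
  ultimately have cong: "mat_cong (m * Q) M (mat 1)" by (rule mat_cong_coprime[OF assms(1)])
  have "U_exponent M = 4 * t mod 5"
  proof -
    have "X \<in> words" unfolding X_def using cong_witness_in_H5 H5_subset_words by blast
    thus ?thesis unfolding M_def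
      by (simp add: U_exponent_mult words_mult X_def U_exponent_cong_witness
          mod_add_left_eq mod_add_right_eq) presburger
  qed
  moreover have "t mod 5 = 2"
  proof -
    have "5 dvd t - r" using assms(3) t by simp
    thus ?thesis using assms(3) r by presburger
  qed
  ultimately have "U_exponent M \<noteq> 0" by presburger
  moreover have "M \<in> H5" by (simp add: M_def X_def cong_witness_in_H5 H5_mult)
  ultimately show ?thesis using that cong by blast
qed

lemma int_prime_power_decompose:
  fixes n p :: int
  assumes "n \<noteq> 0" "\<bar>p\<bar> > 1"
  obtains k m where "n = p ^ k * m" "\<not> p dvd m"
  using assms(1)
proof (induction "nat \<bar>n\<bar>" arbitrary: n thesis rule: less_induct)
  case less
  show ?case
  proof (cases "p dvd n")
    case True
    then obtain n' where n': "n = p * n'" by (auto elim!: dvdE)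
    have "n' \<noteq> 0" "nat \<bar>n'\<bar> < nat \<bar>n\<bar>"
      using less.prems(2) assms(2) n' by (auto simp: abs_mult)
    then obtain k m where "n' = p ^ k * m" "\<not> p dvd m" using less.hyps by blast
    thus ?thesis using less.prems(1)[of "Suc k" m] n' by simp
  next
    case False
    thus ?thesis using less.prems(1)[of 0 n] by simp
  qed
qed

lemma Hcong_not_subset_U_exponent_kernel:
  assumes A: "is_ideal_Zlam A" "A \<noteq> {0}"
  shows "\<not> Hcong A \<subseteq> U_exponent_kernel"
proof -
  obtain n where n: "n \<noteq> 0" "of_int n \<in> A"
    using ideal_contains_nonzero_int[OF A] by blast
  obtain k m where km: "5 * n = 5 ^ k * m" "\<not> 5 dvd m"
    using int_prime_power_decompose[of "5 * n" 5] n(1) by auto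
  have "k \<noteq> 0" using km by (metis dvd_triv_left power_0 mult_1)
  hence "5 dvd (5::int) ^ k" by simp
  moreover have "coprime m (5 ^ k)" by (rule prime_imp_power_coprime) (simp_all add: km(2))
  ultimately obtain M where M: "M \<in> H5" "mat_cong (m * 5 ^ k) M (mat 1)" "U_exponent M \<noteq> 0"
    using exists_U_exponent_nonzero_cong_one[of m "5 ^ k"] by auto
  have "of_int (m * 5 ^ k) = 5 * (of_int n :: real)"
    using arg_cong[OF km(1), of real_of_int] by (simp add: mult.commute)
  hence "of_int (m * 5 ^ k) \<in> A" using A(1) n(2) unfolding is_ideal_Zlam_def by simp
  hence "M \<in> Hcong A"
    using mat_cong_one_imp_Hcong[OF M(1,2)] ideal_Zlam_multiples_subset[OF A(1)] by blast
  thus ?thesis using M(3) by (auto simp: U_exponent_kernel_def)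
qed

theorem proposition7p2:
  shows "\<not> congruence_subgroup H5_fifth \<and> \<not> congruence_subgroup H5_comm"
  unfolding congruence_subgroup_def
  using Hcong_not_subset_U_exponent_kernel H5_fifth_subset_U_exponent_kernel
    H5_comm_subset_U_exponent_kernel by blast

end
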